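(* Let $\alpha_1,\alpha_2,\beta_2,\beta_3,\beta_4,\delta_1,\delta_2,\delta_4>0$ and consider the autonomous system $$u_1'=u_1(1-u_1-\alpha_1u_2-\delta_1u_3),\ u_2'=\beta_2u_2(1-u_2-\alpha_2u_1-\delta_2u_4),\ u_3'=\beta_3(u_2-u_3),\ u_4'=\beta_4(1-u_4-\delta_4u_4u_2).$$ It has the following steady states, with the stated linear stability properties: SS1: $(0,0,0,1)$ is unstable for all parameter values. SS2: $(1,0,0,1)$ is stable iff $\alpha_2+\delta_2>1$. SS3: $(0,\hat u_{2\pm},\hat u_{2\pm},[1+\delta_4\hat u_{2\pm}]^{-1})$ with $\hat u_{2\pm}=[\delta_4-1\pm\sqrt{(1+\delta_4)^2-4\delta_2\delta_4}]/(2\delta_4)$. The one with $\hat u_{2-}$ is unstable for all parameter values; the one with $\hat u_{2+}$ is stable iff $\delta_2<\frac{(\alpha_1+\delta_1+\delta_4)(\alpha_1+\delta_1-1)}{(\alpha_1+\delta_1)^2}$, or $\frac{(\alpha_1+\delta_1+\delta_4)(\alpha_1+\delta_1-1)}{(\alpha_1+\delta_1)^2}\le\delta_2<\frac{(1+\delta_4)^2}{4\delta_4}$ and $\frac1{\delta_4}<\frac{\alpha_1+\delta_1-2}{\alpha_1+\delta_1}$. SS4: $(1-(\alpha_1+\delta_1)\tilde u_{2\pm},\tilde u_{2\pm},\tilde u_{2\pm},[1+\delta_4\tilde u_{2\pm}]^{-1})$ where, writing $A=1-\alpha_2(\alpha_1+\delta_1)$, $$\tilde u_{2\pm}=\frac{-A-\delta_4(\alpha_2-1)\pm\sqrt{[A-\delta_4(\alpha_2-1)]^2-4\delta_2\delta_4A}}{2\delta_4A}.$$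 The one with $\tilde u_{2-}$ is not stable for any parameter values for which all its components are positive. The one with $\tilde u_{2+}$ (write $\tilde u_2=\tilde u_{2+}$) is stable iff $0<(\alpha_1+\delta_1)\tilde u_{2+}<1$, $0<\delta_2<\frac{[A-\delta_4(\alpha_2-1)]^2}{4\delta_4A}$ and $c_1c_2c_3>c_3^2c_0+c_1^2$, where $c_3=1-(\alpha_1+\delta_1)\tilde u_2+\beta_3+\beta_2\tilde u_2+\beta_4(1+\delta_4\tilde u_2)$, $c_2=\beta_3[\beta_2\tilde u_2+\beta_4(1+\delta_4\tilde u_2)]+[1-(\alpha_1+\delta_1)\tilde u_2][\beta_3+\beta_4(1+\delta_4\tilde u_2)+\beta_2\tilde u_2(1-\alpha_2\alpha_1)]+\frac{\beta_2\beta_4\tilde u_2}{1+\delta_4\tilde u_2}[(1+\delta_4\tilde u_2)^2-\delta_2\delta_4]$, $c_1=[1-(\alpha_1+\delta_1)\tilde u_2]\Big[\frac{\beta_2\beta_4\tilde u_2}{1+\delta_4\tilde u_2}[(1+\delta_4\tilde u_2)^2(1-\alpha_2\alpha_1)-\delta_2\delta_4]+\beta_3\beta_4(1+\delta_4\tilde u_2)\Big]+\beta_2\beta_3\tilde u_2[1-(\alpha_1+\delta_1)\tilde u_2]A+\frac{\beta_2\beta_3\beta_4\tilde u_2}{1+\delta_4\tilde u_2}[(1+\delta_4\tilde u_2)^2-\delta_2\delta_4]$, $c_0=\frac{\beta_2\beta_3\beta_4\tilde u_2}{1+\delta_4\tilde u_2}[1-(\alpha_1+\delta_1)\tilde u_2][(1+\delta_4\tilde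 u_2)^2A-\delta_2\delta_4]$.
   Context: "Stable" means linearly stable: all eigenvalues of the Jacobian of the right-hand side at the steady state have negative real part; "unstable" means the Jacobian has an eigenvalue with positive real part. *)

theory Defs
  imports "HOL-Analysis.Analysis"
begin

text \<open>Points of R^4; components are indexed by 1,2,3,4 (in the numeral type 4).\<close>
definition vec4 :: "real \<Rightarrow> real \<Rightarrow> real \<Rightarrow> real \<Rightarrow> real^4" where
  "vec4 a b c d = (\<chi> i. if i = 1 then a else if i = 2 then b else if i = 3 then c else d)"

definition lv_rhs :: "real \<Rightarrow> real \<Rightarrow> real \<Rightarrow> real \<Rightarrow> real \<Rightarrow> real \<Rightarrow> real \<Rightarrow> real
    \<Rightarrow> real^4 \<Rightarrow> real^4" where
  "lv_rhs alpha1 alpha2 beta2 beta3 beta4 delta1 delta2 delta4 u =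
     vec4 (u$1 * (1 - u$1 - alpha1 * u$2 - delta1 * u$3))
          (beta2 * u$2 * (1 - u$2 - alpha2 * u$1 - delta2 * u$4))
          (beta3 * (u$2 - u$3))
          (beta4 * (1 - u$4 - delta4 * u$4 * u$2))"

definition jacobian :: "(real^'n \<Rightarrow> real^'n) \<Rightarrow> real^'n \<Rightarrow> real^'n^'n" where
  "jacobian F x = matrix (frechet_derivative F (at x))"

definition is_eigenvalue :: "real^'n^'n \<Rightarrow> complex \<Rightarrow> bool" where
  "is_eigenvalue M lam \<longleftrightarrow>
     (\<exists>v :: complex^'n. v \<noteq> 0 \<and> (\<chi> i j. complex_of_real (M $ i $ j)) *v v = lam *s v)"

definition lin_stable :: "(real^'n \<Rightarrow> real^'n) \<Rightarrow> real^'n \<Rightarrow> bool" where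
  "lin_stable F x \<longleftrightarrow> (\<forall>lam. is_eigenvalue (jacobian F x) lam \<longrightarrow> Re lam < 0)"

definition lin_unstable :: "(real^'n \<Rightarrow> real^'n) \<Rightarrow> real^'n \<Rightarrow> bool" where
  "lin_unstable F x \<longleftrightarrow> (\<exists>lam. is_eigenvalue (jacobian F x) lam \<and> Re lam > 0)"

end

theory Submission
  imports Defs "HOL-Computational_Algebra.Fundamental_Theorem_Algebra"
begin

text \<open>The Jacobian has the same sparsity pattern at every point, so one expansion of a
  \<open>4 \<times> 4\<close> determinant gives its characteristic polynomial everywhere.  At SS1 and SS2 it
  splits into linear factors.  SS3 and SS4 lie on the branch \<open>u\<^sub>3 = u\<^sub>2\<close>,
  \<open>u\<^sub>4 = 1 / (1 + \<delta>\<^sub>4u\<^sub>2)\<close>, where the steady-state equations reduce it to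
  \<open>(\<lambda> - j)(\<lambda> + \<beta>\<^sub>3)(\<lambda>\<^sup>2 + p\<lambda> + r)\<close> (SS3) or to the quartic with coefficients
  \<open>c\<^sub>3, \<dots>, c\<^sub>0\<close> (SS4).  Stability is then decided by Routh--Hurwitz: a real quadratic
  has its roots in \<open>Re < 0\<close> iff both coefficients are positive, and a real quartic iff
  \<open>c\<^sub>3, c\<^sub>1, c\<^sub>0 > 0\<close> and \<open>c\<^sub>1c\<^sub>2c\<^sub>3 > c\<^sub>1\<^sup>2 + c\<^sub>3\<^sup>2c\<^sub>0\<close>.  The stated parameter
  conditions are these sign conditions rewritten through the quadratic formula for \<open>u\<^sub>2\<close>;
  on the \<open>-\<close> branch of SS4 the constant coefficient \<open>c\<^sub>0\<close> is never positive, and on the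
  \<open>+\<close> branch its positivity already forces \<open>c\<^sub>3, c\<^sub>1 > 0\<close>.\<close>

section \<open>Real polynomials with all roots in the open left half-plane\<close>

lemma quadratic_roots_Re_neg_iff:
  fixes p q :: real
  shows "(\<forall>z::complex. z^2 + p*z + q = 0 \<longrightarrow> Re z < 0) \<longleftrightarrow> p > 0 \<and> q > 0"
proof (cases "p^2 - 4*q \<ge> 0")
  case True
  define s where "s = sqrt (p^2 - 4*q)"
  have s2: "s^2 = p^2 - 4*q" and s0: "s \<ge> 0"
    using True by (simp_all add: s_def)
  define r1 where "r1 = (-p + s)/2"
  define r2 where "r2 = (-p - s)/2"
  have sum: "r1 + r2 = -p" and prod: "r1 * r2 = q" and "r2 \<le> r1"
    using s0 s2 by (simp_all add: r1_def r2_def field_simps power2_eq_square)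
  have "z^2 + p*z + q = (z - r1) * (z - r2)" for z :: complex
  proof -
    have hp: "p = - (r1 + r2)" and hq: "q = r1 * r2"
      using sum prod by simp_all
    show ?thesis
      unfolding hp hq by (simp add: algebra_simps power2_eq_square)
  qed
  then have "(\<forall>z::complex. z^2 + p*z + q = 0 \<longrightarrow> Re z < 0) \<longleftrightarrow> r1 < 0 \<and> r2 < 0"
    by auto
  also have "\<dots> \<longleftrightarrow> p > 0 \<and> q > 0"
    using sum prod \<open>r2 \<le> r1\<close> by (smt (verit) mult_le_0_iff mult_pos_pos)
  finally show ?thesis .
next
  case False
  define s where "s = sqrt (4*q - p^2)"
  have s2: "s^2 = 4*q - p^2"
    using False by (simp add: s_def)
  define r1 where "r1 = Complex (-p/2) (s/2)"
  define r2 where "r2 = Complex (-p/2) (-s/2)"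
  have "z^2 + p*z + q = (z - r1) * (z - r2)" for z :: complex
  proof -
    have hq: "complex_of_real q = r1 * r2" and hp: "complex_of_real p = - (r1 + r2)"
      using s2 by (simp_all add: r1_def r2_def complex_eq_iff field_simps power2_eq_square)
    show ?thesis
      unfolding hp hq by (simp add: algebra_simps power2_eq_square)
  qed
  then have "(\<forall>z::complex. z^2 + p*z + q = 0 \<longrightarrow> Re z < 0) \<longleftrightarrow> p > 0"
    by (auto simp: r1_def r2_def)
  moreover have "q > 0"
    using False by (smt (verit) zero_le_power2)
  ultimately show ?thesis by auto
qed

lemma quadratic_has_positive_root:
  fixes p q :: real
  assumes "q < 0"
  shows "\<exists>x>0. x^2 + p*x + q = 0"
proof -
  define s where "s = sqrt (p^2 - 4*q)"
  have "p^2 - 4*q \<ge> 0"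
    using assms by (smt (verit) zero_le_power2)
  then have s2: "s^2 = p^2 - 4*q"
    by (simp add: s_def)
  have "\<bar>p\<bar> < s"
    using assms by (simp add: s_def real_less_rsqrt)
  moreover have "((-p + s)/2)^2 + p*((-p + s)/2) + q = 0"
    using s2 by (simp add: field_simps power2_eq_square)
  ultimately show ?thesis
    by (intro exI[of _ "(-p + s)/2"]) auto
qed

lemma linear_roots_Re_neg_mult_quadratic_iff:
  fixes j k p r :: real
  assumes "k > 0"
  shows "(\<forall>z::complex. (z - j) * (z + k) * (z^2 + p*z + r) = 0 \<longrightarrow> Re z < 0) \<longleftrightarrow>
         j < 0 \<and> p > 0 \<and> r > 0"
proof -
  have "(z - j) * (z + k) * (z^2 + p*z + r) = 0 \<longleftrightarrow> z = j \<or> z = - k \<or> z^2 + p*z + r = 0"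
    for z :: complex
    by (auto simp: add_eq_0_iff2)
  then have "(\<forall>z::complex. (z - j) * (z + k) * (z^2 + p*z + r) = 0 \<longrightarrow> Re z < 0) \<longleftrightarrow>
             j < 0 \<and> (\<forall>z::complex. z^2 + p*z + r = 0 \<longrightarrow> Re z < 0)"
    using assms by auto
  then show ?thesis
    by (simp add: quadratic_roots_Re_neg_iff)
qed

text \<open>A real root splits off a linear factor by synthetic division; a non-real
  root \<open>r\<close> splits off the real quadratic \<open>z\<^sup>2 - 2 Re r z + \<bar>r\<bar>\<^sup>2\<close>, because the remainder
  is a real linear polynomial vanishing at \<open>r\<close>.\<close>

lemma complex_root_of_real_quadratic:
  "r^2 + complex_of_real (-2 * Re r) * r + complex_of_real (Re r ^2 + Im r ^2) = 0"
  by (simp add: complex_eq_iff power2_eq_square algebra_simps)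

lemma real_linear_vanishing_at_nonreal:
  fixes g d :: real
  assumes "complex_of_real g * r + complex_of_real d = 0" and "Im r \<noteq> 0"
  shows "g = 0 \<and> d = 0"
proof -
  from assms(1) have "Im (complex_of_real g * r + complex_of_real d) = 0"
    by simp
  then have "g * Im r = 0"
    by simp
  with assms show ?thesis by simp
qed

lemma real_cubic_factorization:
  fixes a2 a1 a0 :: real
  shows "\<exists>p q s. a2 = p + s \<and> a1 = q + p * s \<and> a0 = q * s"
proof -
  obtain t :: complex where t: "poly [:a0, a1, a2, 1:] t = 0"
    using fundamental_theorem_of_algebra_alt[of "[:a0, a1, a2, 1:]"] by auto
  show ?thesis
  proof (cases "Im t = 0")
    case True
    define \<tau> where "\<tau> = Re t"
    have "complex_of_real (\<tau>^3 + a2*\<tau>^2 + a1*\<tau> + a0) = 0"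
      using t True by (simp add: \<tau>_def complex_eq_iff algebra_simps power2_eq_square power3_eq_cube)
    then have "a0 = - \<tau> * (a1 + \<tau> * (a2 + \<tau>))"
      by (simp only: of_real_eq_0_iff) (simp add: algebra_simps power2_eq_square power3_eq_cube)
    then have "a2 = (a2 + \<tau>) + (- \<tau>) \<and> a1 = (a1 + \<tau> * (a2 + \<tau>)) + (a2 + \<tau>) * (- \<tau>)
        \<and> a0 = (a1 + \<tau> * (a2 + \<tau>)) * (- \<tau>)"
      by (simp add: algebra_simps)
    then show ?thesis by blast
  next
    case False
    define p where "p = -2 * Re t"
    define q where "q = Re t ^2 + Im t ^2"
    define s where "s = a2 - p"
    have "complex_of_real (a1 - p * s - q) * t + complex_of_real (a0 - q * s) = 0"
    proof -
      have "poly [:a0, a1, a2, 1:] t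
          = (t^2 + p*t + q) * (t + s)
            + (complex_of_real (a1 - p * s - q) * t + complex_of_real (a0 - q * s))"
        by (simp add: s_def algebra_simps power2_eq_square power3_eq_cube)
      moreover have "t^2 + p*t + q = 0"
        unfolding p_def q_def by (rule complex_root_of_real_quadratic)
      ultimately show ?thesis
        using t by (metis add.left_neutral mult_zero_left)
    qed
    then have "a1 - p * s - q = 0 \<and> a0 - q * s = 0"
      using False by (rule real_linear_vanishing_at_nonreal)
    then have "a2 = p + s \<and> a1 = q + p * s \<and> a0 = q * s"
      by (simp add: s_def)
    then show ?thesis by blast
  qed
qed

lemma real_quartic_factorization:
  fixes c3 c2 c1 c0 :: real
  shows "\<exists>p1 q1 p2 q2.
     c3 = p1 + p2 \<and> c2 = q1 + q2 + p1 * p2 \<and> c1 = p1 * q2 + p2 * q1 \<and> c0 = q1 * q2"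
proof -
  obtain r :: complex where r: "poly [:c0, c1, c2, c3, 1:] r = 0"
    using fundamental_theorem_of_algebra_alt[of "[:c0, c1, c2, c3, 1:]"] by auto
  show ?thesis
  proof (cases "Im r = 0")
    case True
    define \<rho> where "\<rho> = Re r"
    define a2 where "a2 = c3 + \<rho>"
    define a1 where "a1 = c2 + \<rho> * a2"
    define a0 where "a0 = c1 + \<rho> * a1"
    have "complex_of_real (\<rho>^4 + c3*\<rho>^3 + c2*\<rho>^2 + c1*\<rho> + c0) = 0"
      using r True
      by (simp add: \<rho>_def complex_eq_iff algebra_simps power2_eq_square power3_eq_cube power4_eq_xxxx)
    then have c0: "c0 = - \<rho> * a0"
      by (simp only: of_real_eq_0_iff)
        (simp add: a0_def a1_def a2_def algebra_simps power2_eq_square power3_eq_cube power4_eq_xxxx)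
    obtain p q s :: real where pqs: "a2 = p + s" "a1 = q + p * s" "a0 = q * s"
      using real_cubic_factorization by blast
    have "c3 = a2 - \<rho>" "c2 = a1 - \<rho> * a2" "c1 = a0 - \<rho> * a1"
      by (simp_all add: a0_def a1_def a2_def)
    with c0 pqs have "c3 = p + (s - \<rho>) \<and> c2 = q + (- \<rho> * s) + p * (s - \<rho>)
        \<and> c1 = p * (- \<rho> * s) + (s - \<rho>) * q \<and> c0 = q * (- \<rho> * s)"
      by (simp add: algebra_simps)
    then show ?thesis by blast
  next
    case False
    define p where "p = -2 * Re r"
    define q where "q = Re r ^2 + Im r ^2"
    define a where "a = c3 - p"
    define b where "b = c2 - q - p*a"
    have "complex_of_real (c1 - p*b - q*a) * r + complex_of_real (c0 - q*b) = 0"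
    proof -
      have "poly [:c0, c1, c2, c3, 1:] r
          = (r^2 + p*r + q) * (r^2 + a*r + b)
            + (complex_of_real (c1 - p*b - q*a) * r + complex_of_real (c0 - q*b))"
        by (simp add: a_def b_def algebra_simps power2_eq_square power3_eq_cube power4_eq_xxxx)
      moreover have "r^2 + p*r + q = 0"
        unfolding p_def q_def by (rule complex_root_of_real_quadratic)
      ultimately show ?thesis
        using r by (metis add.left_neutral mult_zero_left)
    qed
    then have "c1 - p*b - q*a = 0 \<and> c0 - q*b = 0"
      using False by (rule real_linear_vanishing_at_nonreal)
    then have "c3 = p + a \<and> c2 = q + b + p * a \<and> c1 = p * b + a * q \<and> c0 = q * b"
      by (simp add: a_def b_def algebra_simps)
    then show ?thesis by blast
  qed
qed

text \<open>After splitting into two real quadratics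
  with coefficients \<open>(p\<^sub>1, q\<^sub>1)\<close>, \<open>(p\<^sub>2, q\<^sub>2)\<close>, the Hurwitz determinant becomes
  \<open>c\<^sub>1c\<^sub>2c\<^sub>3 - c\<^sub>1\<^sup>2 - c\<^sub>3\<^sup>2c\<^sub>0 = p\<^sub>1p\<^sub>2((q\<^sub>1 - q\<^sub>2)\<^sup>2 + c\<^sub>3c\<^sub>1)\<close>.\<close>

lemma quartic_roots_Re_neg_iff:
  fixes c3 c2 c1 c0 :: real
  shows "(\<forall>z::complex. z^4 + c3*z^3 + c2*z^2 + c1*z + c0 = 0 \<longrightarrow> Re z < 0) \<longleftrightarrow>
         c3 > 0 \<and> c1 > 0 \<and> c0 > 0 \<and> c1 * c2 * c3 > c1^2 + c3^2 * c0"
proof -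
  obtain p1 q1 p2 q2 :: real where c: "c3 = p1 + p2" "c2 = q1 + q2 + p1 * p2"
      "c1 = p1 * q2 + p2 * q1" "c0 = q1 * q2"
    using real_quartic_factorization by blast
  have hurwitz: "c1 * c2 * c3 - (c1^2 + c3^2 * c0) = p1 * p2 * ((q1 - q2)^2 + c3 * c1)"
    by (simp add: c algebra_simps power2_eq_square)
  have "z^4 + c3*z^3 + c2*z^2 + c1*z + c0 = (z^2 + p1*z + q1) * (z^2 + p2*z + q2)" for z :: complex
    by (simp add: c algebra_simps power2_eq_square power3_eq_cube power4_eq_xxxx)
  then have "(\<forall>z::complex. z^4 + c3*z^3 + c2*z^2 + c1*z + c0 = 0 \<longrightarrow> Re z < 0) \<longleftrightarrow>
        (\<forall>z::complex. z^2 + p1*z + q1 = 0 \<longrightarrow> Re z < 0) \<and> (\<forall>z::complex. z^2 + p2*z + q2 = 0 \<longrightarrow> Re z < 0)"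
    by auto
  also have "\<dots> \<longleftrightarrow> p1 > 0 \<and> q1 > 0 \<and> p2 > 0 \<and> q2 > 0"
    by (simp add: quadratic_roots_Re_neg_iff)
  also have "\<dots> \<longleftrightarrow> c3 > 0 \<and> c1 > 0 \<and> c0 > 0 \<and> c1 * c2 * c3 > c1^2 + c3^2 * c0"
  proof
    assume h: "p1 > 0 \<and> q1 > 0 \<and> p2 > 0 \<and> q2 > 0"
    then have "c3 > 0" "c1 > 0" "c0 > 0"
      by (simp_all add: c add_pos_pos)
    moreover have "p1 * p2 * ((q1 - q2)^2 + c3 * c1) > 0"
      using h \<open>c3 > 0\<close> \<open>c1 > 0\<close> by (simp add: add_nonneg_pos)
    ultimately show "c3 > 0 \<and> c1 > 0 \<and> c0 > 0 \<and> c1 * c2 * c3 > c1^2 + c3^2 * c0"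
      using hurwitz by linarith
  next
    assume h: "c3 > 0 \<and> c1 > 0 \<and> c0 > 0 \<and> c1 * c2 * c3 > c1^2 + c3^2 * c0"
    moreover have "(q1 - q2)^2 + c3 * c1 > 0"
      using h by (simp add: add_nonneg_pos)
    ultimately have "p1 * p2 > 0"
      using hurwitz by (smt (verit) zero_less_mult_iff)
    with h c(1) have p: "p1 > 0" "p2 > 0"
      by (auto simp: zero_less_mult_iff)
    moreover from h c(4) have "q1 * q2 > 0" by simp
    moreover from h c(3) p have "\<not> (q1 < 0 \<and> q2 < 0)"
      by (smt (verit) mult_pos_neg)
    ultimately show "p1 > 0 \<and> q1 > 0 \<and> p2 > 0 \<and> q2 > 0"
      by (auto simp: zero_less_mult_iff)
  qed
  finally show ?thesis .
qed

section \<open>Eigenvalues and the Jacobian of the system\<close>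

lemma is_eigenvalue_iff_det:
  fixes M :: "real^'n^'n"
  shows "is_eigenvalue M lam \<longleftrightarrow> det (mat lam - (\<chi> i j. complex_of_real (M$i$j))) = 0"
proof -
  let ?M = "\<chi> i j. complex_of_real (M$i$j)"
  let ?N = "mat lam - ?M"
  have "?N *v v = lam *s v - ?M *v v" for v
    by (simp add: vec_eq_iff matrix_vector_mult_def mat_def left_diff_distrib sum_subtractf
        if_distrib[where f="\<lambda>x. x * _"] cong: if_cong)
  then have kernel: "?M *v v = lam *s v \<longleftrightarrow> ?N *v v = 0" for v
    by (metis eq_iff_diff_eq_0)
  have "det ?N \<noteq> 0 \<longleftrightarrow> (\<forall>v. ?N *v v = 0 \<longrightarrow> v = 0)"
    by (simp add: invertible_det_nz[symmetric] invertible_left_inverse matrix_left_invertible_ker)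
  then show ?thesis
    unfolding is_eigenvalue_def kernel by blast
qed

lemma det_4:
  "det (A::'a::comm_ring_1^4^4) =
    A$1$1 * (A$2$2 * (A$3$3 * A$4$4 - A$3$4 * A$4$3) - A$2$3 * (A$3$2 * A$4$4 - A$3$4 * A$4$2) + A$2$4 * (A$3$2 * A$4$3 - A$3$3 * A$4$2))
  - A$1$2 * (A$2$1 * (A$3$3 * A$4$4 - A$3$4 * A$4$3) - A$2$3 * (A$3$1 * A$4$4 - A$3$4 * A$4$1) + A$2$4 * (A$3$1 * A$4$3 - A$3$3 * A$4$1))
  + A$1$3 * (A$2$1 * (A$3$2 * A$4$4 - A$3$4 * A$4$2) - A$2$2 * (A$3$1 * A$4$4 - A$3$4 * A$4$1) + A$2$4 * (A$3$1 * A$4$2 - A$3$2 * A$4$1))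
  - A$1$4 * (A$2$1 * (A$3$2 * A$4$3 - A$3$3 * A$4$2) - A$2$2 * (A$3$1 * A$4$3 - A$3$3 * A$4$1) + A$2$3 * (A$3$1 * A$4$2 - A$3$2 * A$4$1))"
proof -
  have f1: "finite {2::4, 3, 4}" "1 \<notin> {2::4, 3, 4}" by auto
  have f2: "finite {3::4, 4}" "2 \<notin> {3::4, 4}" by auto
  have f3: "finite {4::4}" "3 \<notin> {4::4}" by auto
  show ?thesis
    unfolding det_def UNIV_4
    unfolding sum_over_permutations_insert[OF f1]
    unfolding sum_over_permutations_insert[OF f2]
    unfolding sum_over_permutations_insert[OF f3]
    unfolding permutes_sing
    by (simp add: sign_swap_id permutation_swap_id permutation_compose sign_compose sign_id
        swap_id_eq algebra_simps)
qed

definition lv_pattern_matrix ::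
    "real \<Rightarrow> real \<Rightarrow> real \<Rightarrow> real \<Rightarrow> real \<Rightarrow> real \<Rightarrow> real \<Rightarrow> real \<Rightarrow> real \<Rightarrow> real \<Rightarrow> real^4^4" where
  "lv_pattern_matrix j11 j12 j13 j21 j22 j24 j32 j33 j42 j44 = (\<chi> r c.
     if r = 1 then (if c = 1 then j11 else if c = 2 then j12 else if c = 3 then j13 else 0)
     else if r = 2 then (if c = 1 then j21 else if c = 2 then j22 else if c = 3 then 0 else j24)
     else if r = 3 then (if c = 1 then 0 else if c = 2 then j32 else if c = 3 then j33 else 0)
     else (if c = 1 then 0 else if c = 2 then j42 else if c = 3 then 0 else j44))"

lemma is_eigenvalue_lv_pattern_matrix_iff:
  "is_eigenvalue (lv_pattern_matrix j11 j12 j13 j21 j22 j24 j32 j33 j42 j44) lam \<longleftrightarrow>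
     (lam - j11) * (lam - j33) * ((lam - j22) * (lam - j44) - j24 * j42)
     - j12 * j21 * (lam - j33) * (lam - j44) - j13 * j21 * j32 * (lam - j44) = 0"
  unfolding is_eigenvalue_iff_det det_4 by (simp add: lv_pattern_matrix_def mat_def algebra_simps)

lemma vec4_nth [simp]:
  "vec4 a b c d $ 1 = a" "vec4 a b c d $ 2 = b" "vec4 a b c d $ 3 = c" "vec4 a b c d $ 4 = d"
  by (simp_all add: vec4_def)

lemma vec4_eq_0_iff: "vec4 a b c d = 0 \<longleftrightarrow> a = 0 \<and> b = 0 \<and> c = 0 \<and> d = 0"
  by (auto simp: vec_eq_iff forall_4)

lemma has_derivative_vec_componentwise:
  fixes f :: "'a::real_normed_vector \<Rightarrow> real^'n"
  assumes "\<And>k. ((\<lambda>y. f y $ k) has_derivative (\<lambda>h. f' h $ k)) (at x within S)"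
  shows "(f has_derivative f') (at x within S)"
proof (subst has_derivative_componentwise_within, intro ballI)
  fix i :: "real^'n" assume "i \<in> Basis"
  then obtain k where "i = axis k 1" by (auto simp: Basis_vec_def)
  then show "((\<lambda>y. f y \<bullet> i) has_derivative (\<lambda>h. f' h \<bullet> i)) (at x within S)"
    using assms by (simp add: cart_eq_inner_axis)
qed

section \<open>Algebra of the steady-state formulas\<close>

text \<open>\<open>e = \<plusminus>1\<close> selects the SS3 root \<open>u\<^sub>2\<^sub>\<plusminus>\<close> of \<open>(1 - u)(1 + \<delta>\<^sub>4u) = \<delta>\<^sub>2\<close>.\<close>

lemma SS3_root_identities:
  fixes d2 d4 s e u :: real
  assumes "d4 > 0" and s2: "s^2 = (1 + d4)^2 - 4 * d2 * d4" and e: "e^2 = 1"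
    and u: "2 * d4 * u = d4 - 1 + e * s"
  shows "(1 - u) * (1 + d4 * u) = d2"
    and "1 + d4 * u = (1 + d4 + e * s) / 2"
    and "(1 + d4 * u)^2 - d2 * d4 = s * (s + e * (1 + d4)) / 2"
proof -
  have h1: "1 - u = (1 + d4 - e * s) / (2 * d4)"
    using \<open>d4 > 0\<close> u by (simp add: field_simps)
  show h2: "1 + d4 * u = (1 + d4 + e * s) / 2"
    using u by (simp add: field_simps)
  have "(1 - u) * (1 + d4 * u) = ((1 + d4)^2 - e^2 * s^2) / (4 * d4)"
    unfolding h1 h2 using \<open>d4 > 0\<close> by (simp add: field_simps power2_eq_square)
  also have "\<dots> = d2"
    using \<open>d4 > 0\<close> by (simp add: e s2)
  finally show "(1 - u) * (1 + d4 * u) = d2" .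
  have "(1 + d4 * u)^2 - d2 * d4 = ((1 + d4)^2 + 2 * e * s * (1 + d4) + e^2 * s^2) / 4 - d2 * d4"
    unfolding h2 by (simp add: field_simps power2_eq_square)
  also have "\<dots> = ((1 + d4)^2 + 2 * e * s * (1 + d4) + s^2) / 4 - ((1 + d4)^2 - s^2) / 4"
    using \<open>d4 > 0\<close> by (simp add: e s2)
  also have "\<dots> = s * (s + e * (1 + d4)) / 2"
    by (simp add: field_simps power2_eq_square)
  finally show "(1 + d4 * u)^2 - d2 * d4 = s * (s + e * (1 + d4)) / 2" .
qed

text \<open>With \<open>t = 2\<delta>\<^sub>4 - a(\<delta>\<^sub>4 - 1)\<close> the first condition reads \<open>a s > t\<close>, and
  \<open>(a s)\<^sup>2 - t\<^sup>2 = 4\<delta>\<^sub>4((a - 1)(a + \<delta>\<^sub>4) - a\<^sup>2\<delta>\<^sub>2)\<close>.\<close>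

lemma SS3_plus_condition_iff:
  fixes a d2 d4 s :: real
  defines "K \<equiv> (a + d4) * (a - 1) / a^2"
  assumes "a > 0" and "d4 > 0" and "s \<ge> 0" and s2: "s^2 = (1 + d4)^2 - 4 * d2 * d4"
  shows "a * (d4 - 1 + s) > 2 * d4 \<and> s > 0 \<longleftrightarrow>
    d2 < K \<or> (K \<le> d2 \<and> d2 < (1 + d4)^2 / (4 * d4) \<and> 1 / d4 < (a - 2) / a)"
proof -
  define t where "t = 2 * d4 - a * (d4 - 1)"
  have "(a * s)^2 = a^2 * ((1 + d4)^2 - 4 * d2 * d4)"
    by (simp add: power_mult_distrib s2)
  then have diff: "(a * s)^2 - t^2 = 4 * d4 * ((a - 1) * (a + d4) - a^2 * d2)"
    by (simp add: t_def algebra_simps power2_eq_square)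
  have "d2 < K \<longleftrightarrow> a^2 * d2 < (a - 1) * (a + d4)"
    using assms(2) by (simp add: K_def field_simps)
  also have "\<dots> \<longleftrightarrow> 0 < 4 * d4 * ((a - 1) * (a + d4) - a^2 * d2)"
    using assms(3) by (simp add: zero_less_mult_iff)
  also have "\<dots> \<longleftrightarrow> t^2 < (a * s)^2"
    unfolding diff[symmetric] by simp
  finally have K: "d2 < K \<longleftrightarrow> t^2 < (a * s)^2" .
  have "s > 0 \<longleftrightarrow> s^2 > 0"
    using assms(4) by (auto simp: zero_less_power2)
  also have "\<dots> \<longleftrightarrow> d2 < (1 + d4)^2 / (4 * d4)"
    using assms(3) by (simp add: s2 field_simps)
  finally have s: "s > 0 \<longleftrightarrow> d2 < (1 + d4)^2 / (4 * d4)" .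
  have t: "1 / d4 < (a - 2) / a \<longleftrightarrow> t < 0"
    using assms(2,3) by (simp add: t_def field_simps)
  have "a * s \<ge> 0"
    using assms(2,4) by simp
  then have "t^2 < (a * s)^2 \<longleftrightarrow> \<bar>t\<bar> < a * s"
    using abs_le_square_iff[of "a * s" t] by auto
  moreover have "a * s > 0 \<longleftrightarrow> s > 0"
    using assms(2) by (simp add: zero_less_mult_iff)
  ultimately have "a * s > t \<and> s > 0 \<longleftrightarrow> t^2 < (a * s)^2 \<or> (\<not> t^2 < (a * s)^2 \<and> s > 0 \<and> t < 0)"
    by (auto simp: abs_less_iff)
  moreover have "a * (d4 - 1 + s) > 2 * d4 \<longleftrightarrow> a * s > t"
    by (simp add: t_def algebra_simps)
  ultimately show ?thesis
    unfolding not_less[symmetric] K s t by simp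
qed

text \<open>\<open>e = \<plusminus>1\<close> selects the SS4 root \<open>u\<^sub>2\<^sub>\<plusminus>\<close> of
  \<open>(1 - u - \<alpha>\<^sub>2(1 - au))(1 + \<delta>\<^sub>4u) = \<delta>\<^sub>2\<close>, where \<open>a = \<alpha>\<^sub>1 + \<delta>\<^sub>1\<close>.\<close>

lemma SS4_root_identities:
  fixes a a2 d2 d4 A S e u :: real
  assumes "d4 > 0" and "A \<noteq> 0" and A: "A = 1 - a2 * a"
    and S2: "S^2 = (A - d4 * (a2 - 1))^2 - 4 * d2 * d4 * A" and e: "e^2 = 1"
    and u: "2 * d4 * A * u = - A - d4 * (a2 - 1) + e * S"
  shows "(1 - u - a2 * (1 - a * u)) * (1 + d4 * u) = d2"
    and "(1 + d4 * u)^2 * A - d2 * d4 = e * (1 + d4 * u) * S"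
proof -
  define E where "E = A - d4 * (a2 - 1)"
  define q where "q = 1 + d4 * u"
  define m where "m = 1 - u - a2 * (1 - a * u)"
  have hq: "2 * A * q = E + e * S"
    using u by (simp add: q_def E_def algebra_simps)
  have hm: "2 * d4 * m = E - e * S"
    using u by (simp add: m_def E_def A algebra_simps)
  have "(4 * A * d4) * (m * q) = (2 * d4 * m) * (2 * A * q)"
    by (simp add: algebra_simps)
  also have "\<dots> = E^2 - e^2 * S^2"
    unfolding hq hm by (simp add: algebra_simps power2_eq_square)
  also have "\<dots> = (4 * A * d4) * d2"
    unfolding e S2 E_def by (simp add: algebra_simps)
  finally have "m * q = d2"
    using \<open>d4 > 0\<close> \<open>A \<noteq> 0\<close> by simp
  then show "(1 - u - a2 * (1 - a * u)) * (1 + d4 * u) = d2"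
    by (simp add: m_def q_def)
  have "2 * (q^2 * A - d2 * d4) = q * (2 * A * q) - q * (2 * d4 * m)"
    using \<open>m * q = d2\<close> by (simp add: algebra_simps power2_eq_square)
  also have "\<dots> = 2 * (e * q * S)"
    unfolding hq hm by (simp add: algebra_simps)
  finally show "(1 + d4 * u)^2 * A - d2 * d4 = e * (1 + d4 * u) * S"
    by (simp add: q_def)
qed

lemma SS4_plus_positivity:
  fixes a d2 d4 A S u :: real
  assumes "a > 0" "d2 > 0" "d4 > 0" "S \<ge> 0"
    and qS: "(1 + d4 * u)^2 * A - d2 * d4 = (1 + d4 * u) * S"
    and pos: "u * (1 - a * u) * S > 0"
  shows "u > 0" and "1 - a * u > 0" and "S > 0" and "(1 + d4 * u)^2 * A > d2 * d4" and "A > 0"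
proof -
  from pos have "S > 0" and ub: "u * (1 - a * u) > 0"
    using \<open>S \<ge> 0\<close> by (auto simp: zero_less_mult_iff)
  then show "S > 0"
    by simp
  show "u > 0"
  proof (rule ccontr)
    assume "\<not> u > 0"
    then have "a * u \<le> 0"
      using \<open>a > 0\<close> by (simp add: mult_nonneg_nonpos not_less)
    with ub \<open>\<not> u > 0\<close> show False
      by (simp add: zero_less_mult_iff)
  qed
  with ub show "1 - a * u > 0"
    by (simp add: zero_less_mult_iff)
  have "1 + d4 * u > 0"
    using \<open>u > 0\<close> \<open>d4 > 0\<close> by (simp add: add_pos_pos)
  then have "(1 + d4 * u) * S > 0"
    using \<open>S > 0\<close> by simp
  then show "(1 + d4 * u)^2 * A > d2 * d4"
    using qS by linarith
  moreover have "d2 * d4 > 0"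
    using \<open>d2 > 0\<close> \<open>d4 > 0\<close> by simp
  ultimately show "A > 0"
    by (smt (verit) zero_less_mult_iff zero_le_power2)
qed

lemma SS4_plus_sign_iff:
  fixes a a2 d2 d4 A S u :: real
  assumes "a > 0" "d2 > 0" "d4 > 0" "S \<ge> 0"
    and S2: "S^2 = (A - d4 * (a2 - 1))^2 - 4 * d2 * d4 * A"
    and qS: "(1 + d4 * u)^2 * A - d2 * d4 = (1 + d4 * u) * S"
  shows "u * (1 - a * u) * S > 0 \<longleftrightarrow>
    0 < a * u \<and> a * u < 1 \<and> d2 < (A - d4 * (a2 - 1))^2 / (4 * d4 * A)"
proof
  assume "u * (1 - a * u) * S > 0"
  note pos = SS4_plus_positivity[OF assms(1-4) qS this]
  then have "4 * d2 * d4 * A < (A - d4 * (a2 - 1))^2"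
    using S2 by (smt (verit) zero_less_power2)
  with pos \<open>a > 0\<close> \<open>d4 > 0\<close>
  show "0 < a * u \<and> a * u < 1 \<and> d2 < (A - d4 * (a2 - 1))^2 / (4 * d4 * A)"
    by (simp add: field_simps)
next
  assume h: "0 < a * u \<and> a * u < 1 \<and> d2 < (A - d4 * (a2 - 1))^2 / (4 * d4 * A)"
  then have "u > 0"
    using \<open>a > 0\<close> by (simp add: zero_less_mult_iff)
  have "A > 0"
  proof (rule ccontr)
    assume "\<not> A > 0"
    then have "(A - d4 * (a2 - 1))^2 / (4 * d4 * A) \<le> 0"
      using \<open>d4 > 0\<close> by (simp add: divide_nonneg_nonpos mult_nonneg_nonpos)
    with h \<open>d2 > 0\<close> show False
      by simp
  qed
  then have "4 * d2 * d4 * A < (A - d4 * (a2 - 1))^2"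
    using h \<open>d4 > 0\<close> by (simp add: field_simps)
  then have "S \<noteq> 0"
    using S2 by auto
  with h \<open>u > 0\<close> \<open>S \<ge> 0\<close> show "u * (1 - a * u) * S > 0"
    by simp
qed

section \<open>The steady states\<close>

context
  fixes a1 a2 b2 b3 b4 d1 d2 d4 :: real
begin

private abbreviation "F \<equiv> lv_rhs a1 a2 b2 b3 b4 d1 d2 d4"

definition lv_jacobian :: "real^4 \<Rightarrow> real^4^4" where
  "lv_jacobian x = lv_pattern_matrix
     (1 - 2*x$1 - a1*x$2 - d1*x$3) (-a1*x$1) (-d1*x$1)
     (-b2*a2*x$2) (b2*(1 - 2*x$2 - a2*x$1 - d2*x$4)) (-b2*d2*x$2)
     b3 (-b3)
     (-b4*d4*x$4) (-b4*(1 + d4*x$2))"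

lemma lv_rhs_has_derivative: "(F has_derivative (\<lambda>h. lv_jacobian x *v h)) (at x)"
proof (rule has_derivative_vec_componentwise)
  have nth: "((\<lambda>y::real^4. y $ j) has_derivative (\<lambda>h. h $ j)) (at x)" for j
    by (rule bounded_linear_imp_has_derivative[OF bounded_linear_vec_nth])
  show "((\<lambda>y. F y $ k) has_derivative (\<lambda>h. (lv_jacobian x *v h) $ k)) (at x)" for k
    using exhaust_4[of k]
    by (elim disjE) (simp_all add: lv_rhs_def, (rule has_derivative_eq_rhs,
        (auto intro!: derivative_eq_intros nth)[1],
        simp add: lv_jacobian_def lv_pattern_matrix_def matrix_vector_mult_def sum_4 fun_eq_iff
          algebra_simps)+)
qed

lemma jacobian_lv_rhs: "jacobian F x = lv_jacobian x"
  unfolding jacobian_def using frechet_derivative_at[OF lv_rhs_has_derivative]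
  by (metis matrix_of_matrix_vector_mul)

lemma SS1_unstable: "F (vec4 0 0 0 1) = 0 \<and> lin_unstable F (vec4 0 0 0 1)"
  by (auto simp: lv_rhs_def vec4_eq_0_iff lin_unstable_def jacobian_lv_rhs lv_jacobian_def
      is_eigenvalue_lv_pattern_matrix_iff intro!: exI[of _ 1])

lemma SS2_stable_iff:
  assumes "b2 > 0" "b3 > 0" "b4 > 0"
  shows "F (vec4 1 0 0 1) = 0 \<and> (lin_stable F (vec4 1 0 0 1) \<longleftrightarrow> a2 + d2 > 1)"
proof
  show "F (vec4 1 0 0 1) = 0"
    by (simp add: lv_rhs_def vec4_eq_0_iff)
  define e where "e = b2 * (1 - a2 - d2)"
  have "is_eigenvalue (jacobian F (vec4 1 0 0 1)) lam \<longleftrightarrow> (lam + 1) * (lam + b3) * (lam - e) * (lam + b4) = 0"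
    for lam
    by (simp add: jacobian_lv_rhs lv_jacobian_def is_eigenvalue_lv_pattern_matrix_iff e_def algebra_simps)
  then have "lin_stable F (vec4 1 0 0 1) \<longleftrightarrow> e < 0"
    using assms by (auto simp: lin_stable_def add_eq_0_iff2)
  also have "\<dots> \<longleftrightarrow> a2 + d2 > 1"
    unfolding e_def using assms by (auto simp: mult_less_0_iff)
  finally show "lin_stable F (vec4 1 0 0 1) \<longleftrightarrow> a2 + d2 > 1" .
qed

lemma branch_steady_state:
  fixes u b :: real
  defines "q \<equiv> 1 + d4 * u"
  assumes "(1 - u - a2 * b) * q = d2" and "b * (1 - b - (a1 + d1) * u) = 0" and "d2 \<noteq> 0"
  shows "F (vec4 b u u (1 / q)) = 0"
proof -
  have q0: "q \<noteq> 0"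
    using assms(2,4) by auto
  then have "d2 / q = 1 - u - a2 * b"
    using assms(2) by (metis nonzero_mult_div_cancel_right)
  moreover have "1 - 1 / q - d4 * (1 / q) * u = 0"
    using q0 by (simp add: q_def field_simps)
  moreover have "b * (1 - b - a1 * u - d1 * u) = 0"
    using assms(3) by (simp add: algebra_simps)
  ultimately show ?thesis
    by (simp add: lv_rhs_def vec4_eq_0_iff)
qed

lemma branch_eigenvalue_iff:
  fixes u b :: real and lam :: complex
  defines "q \<equiv> 1 + d4 * u"
  assumes "(1 - u - a2 * b) * q = d2" and "d2 \<noteq> 0"
  shows "is_eigenvalue (jacobian F (vec4 b u u (1 / q))) lam \<longleftrightarrow>
    (lam - (1 - 2*b - (a1 + d1)*u)) * (lam + b3)
      * (lam^2 + (b2*u + b4*q)*lam + b2*b4*u/q*(q^2 - d2*d4))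
    - a2*b2*b*u * (lam + b4*q) * (a1*(lam + b3) + d1*b3) = 0"
proof -
  have q0: "q \<noteq> 0"
    using assms(2,3) by auto
  have "d2 / q = 1 - u - a2 * b"
    using assms(2) q0 by (metis nonzero_mult_div_cancel_right)
  then have "1 - 2*u - a2*b - d2 * (1/q) = - u"
    by simp
  then have J22: "b2 * (1 - 2*u - a2*b - d2 * (1/q)) = b2 * (- u)"
    by (simp only:)
  have J: "jacobian F (vec4 b u u (1 / q)) = lv_pattern_matrix
     (1 - 2*b - (a1 + d1)*u) (-a1*b) (-d1*b) (-b2*a2*u) (-b2*u) (-b2*d2*u) b3 (-b3) (-b4*d4/q) (-b4*q)"
    unfolding jacobian_lv_rhs lv_jacobian_def vec4_nth J22 by (simp add: q_def algebra_simps)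
  have "complex_of_real q \<noteq> 0"
    using q0 by simp
  then show ?thesis
    unfolding J is_eigenvalue_lv_pattern_matrix_iff
    by (intro arg_cong[where f="\<lambda>z. z = (0::complex)"]) (simp add: field_simps power2_eq_square)
qed

lemma SS3_eigenvalue_iff:
  fixes u :: real and lam :: complex
  defines "q \<equiv> 1 + d4 * u"
  assumes "(1 - u) * q = d2" and "d2 \<noteq> 0"
  shows "F (vec4 0 u u (1 / q)) = 0"
    and "is_eigenvalue (jacobian F (vec4 0 u u (1 / q))) lam \<longleftrightarrow>
      (lam - (1 - (a1 + d1) * u)) * (lam + b3)
        * (lam^2 + (b2*u + b4*q)*lam + b2*b4*u/q*(q^2 - d2*d4)) = 0"
  using branch_steady_state[of u 0] branch_eigenvalue_iff[of u 0 lam] assms by simp_all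

lemma SS3_minus_unstable:
  fixes u :: real and P :: "real^4"
  defines "u \<equiv> (d4 - 1 - sqrt ((1 + d4)^2 - 4 * d2 * d4)) / (2 * d4)"
  defines "P \<equiv> vec4 0 u u (1 / (1 + d4 * u))"
  assumes "a1 > 0" "d1 > 0" "b2 > 0" "b4 > 0" "d2 > 0" "d4 > 0"
    and D: "(1 + d4)^2 - 4 * d2 * d4 > 0"
  shows "F P = 0 \<and> lin_unstable F P"
proof -
  have "d2 \<noteq> 0"
    using \<open>d2 > 0\<close> by simp
  define s where "s = sqrt ((1 + d4)^2 - 4 * d2 * d4)"
  define q where "q = 1 + d4 * u"
  have s2: "s^2 = (1 + d4)^2 - 4 * d2 * d4" and "s > 0"
    using D by (simp_all add: s_def)
  have "2 * d4 * u = d4 - 1 + (-1) * s"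
    using \<open>d4 > 0\<close> by (simp add: u_def s_def)
  note roots = SS3_root_identities[OF \<open>d4 > 0\<close> s2 _ this, folded q_def, simplified]
  have "s^2 < (1 + d4)^2"
    using s2 \<open>d2 > 0\<close> \<open>d4 > 0\<close> by simp
  then have "s < 1 + d4"
    using \<open>d4 > 0\<close> by (simp add: power_less_imp_less_base)
  then have "q > 0"
    using roots(2) by simp
  have "q^2 - d2 * d4 = s * (s - (1 + d4)) / 2"
    using roots(3) by (simp add: algebra_simps)
  moreover have "s * (s - (1 + d4)) < 0"
    using \<open>s > 0\<close> \<open>s < 1 + d4\<close> by (simp add: mult_pos_neg)
  ultimately have "q^2 - d2 * d4 < 0"
    by simp
  have P: "P = vec4 0 u u (1 / q)"
    by (simp add: P_def q_def)
  note eig = SS3_eigenvalue_iff[of u, folded q_def, unfolded P[symmetric], OF roots(1) \<open>d2 \<noteq> 0\<close>]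
  have "\<exists>lam. is_eigenvalue (jacobian F P) lam \<and> Re lam > 0"
  proof (cases "1 - (a1 + d1) * u > 0")
    case True
    then show ?thesis
      using \<open>d2 > 0\<close> by (intro exI[of _ "complex_of_real (1 - (a1 + d1) * u)"]) (simp add: eig)
  next
    case False
    then have "(a1 + d1) * u > 0"
      by linarith
    then have "u > 0"
      using \<open>a1 > 0\<close> \<open>d1 > 0\<close> by (simp add: zero_less_mult_iff)
    then have "b2*b4*u/q > 0"
      using \<open>b2 > 0\<close> \<open>b4 > 0\<close> \<open>q > 0\<close> by simp
    then have "b2*b4*u/q*(q^2 - d2*d4) < 0"
      using \<open>q^2 - d2 * d4 < 0\<close> by (rule mult_pos_neg)
    then obtain x where "x > 0" "x^2 + (b2*u + b4*q)*x + b2*b4*u/q*(q^2 - d2*d4) = 0"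
      using quadratic_has_positive_root by blast
    then have "(complex_of_real x)^2 + (b2*u + b4*q) * complex_of_real x
        + b2*b4*u/q*(q^2 - d2*d4) = 0"
      by (metis of_real_0 of_real_add of_real_mult of_real_power)
    then show ?thesis
      using \<open>x > 0\<close> \<open>d2 > 0\<close> by (intro exI[of _ "complex_of_real x"]) (simp add: eig)
  qed
  then show ?thesis
    using eig(1) \<open>d2 > 0\<close> by (simp add: lin_unstable_def)
qed

lemma SS3_plus_stable_iff:
  fixes u a K :: real and P :: "real^4"
  defines "u \<equiv> (d4 - 1 + sqrt ((1 + d4)^2 - 4 * d2 * d4)) / (2 * d4)"
  defines "P \<equiv> vec4 0 u u (1 / (1 + d4 * u))" and "a \<equiv> a1 + d1"
  defines "K \<equiv> (a + d4) * (a - 1) / a^2"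
  assumes "a1 > 0" "d1 > 0" "b2 > 0" "b3 > 0" "b4 > 0" "d2 > 0" "d4 > 0"
    and D: "(1 + d4)^2 - 4 * d2 * d4 \<ge> 0"
  shows "F P = 0 \<and>
    (lin_stable F P \<longleftrightarrow> d2 < K \<or> (K \<le> d2 \<and> d2 < (1 + d4)^2 / (4 * d4) \<and> 1 / d4 < (a - 2) / a))"
proof -
  have "d2 \<noteq> 0" and "a > 0"
    using \<open>d2 > 0\<close> \<open>a1 > 0\<close> \<open>d1 > 0\<close> by (simp_all add: a_def)
  define s where "s = sqrt ((1 + d4)^2 - 4 * d2 * d4)"
  define q where "q = 1 + d4 * u"
  have s2: "s^2 = (1 + d4)^2 - 4 * d2 * d4" and "s \<ge> 0"
    using D by (simp_all add: s_def)
  have "2 * d4 * u = d4 - 1 + 1 * s"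
    using \<open>d4 > 0\<close> by (simp add: u_def s_def)
  note roots = SS3_root_identities[OF \<open>d4 > 0\<close> s2 _ this, folded q_def, simplified]
  have "q > 0"
    using roots(2) \<open>s \<ge> 0\<close> \<open>d4 > 0\<close> by simp
  have q2: "q^2 - d2 * d4 = s * (s + (1 + d4)) / 2"
    using roots(3) by (simp add: algebra_simps)
  have P: "P = vec4 0 u u (1 / q)"
    by (simp add: P_def q_def)
  note eig = SS3_eigenvalue_iff[of u, folded q_def, unfolded P[symmetric], OF roots(1) \<open>d2 \<noteq> 0\<close>]
  have "lin_stable F P \<longleftrightarrow> 1 - a * u < 0 \<and> b2*u + b4*q > 0 \<and> b2*b4*u/q*(q^2 - d2*d4) > 0"
    unfolding lin_stable_def eig(2) a_def
    by (rule linear_roots_Re_neg_mult_quadratic_iff[OF \<open>b3 > 0\<close>])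
  also have "\<dots> \<longleftrightarrow> a * u > 1 \<and> s > 0"
  proof (cases "a * u > 1")
    case True
    then have "u > 0"
      using \<open>a > 0\<close> zero_less_mult_pos[of a u] by linarith
    then have "b2*u + b4*q > 0" and "b2*b4*u/q > 0"
      using \<open>b2 > 0\<close> \<open>b4 > 0\<close> \<open>q > 0\<close> by (simp_all add: add_pos_pos)
    moreover have "q^2 - d2*d4 > 0 \<longleftrightarrow> s > 0"
      using \<open>s \<ge> 0\<close> \<open>d4 > 0\<close> by (simp add: q2 zero_less_mult_iff)
    moreover have "1 - a * u < 0"
      using True by simp
    ultimately show ?thesis
      using True by (meson mult_pos_pos zero_less_mult_pos)
  qed simp
  also have "a * u > 1 \<longleftrightarrow> a * (d4 - 1 + s) > 2 * d4"
    using \<open>d4 > 0\<close> by (simp add: u_def s_def field_simps)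
  also have "\<dots> \<and> s > 0 \<longleftrightarrow>
      d2 < K \<or> (K \<le> d2 \<and> d2 < (1 + d4)^2 / (4 * d4) \<and> 1 / d4 < (a - 2) / a)"
    unfolding K_def by (rule SS3_plus_condition_iff[OF \<open>a > 0\<close> \<open>d4 > 0\<close> \<open>s \<ge> 0\<close> s2])
  finally show ?thesis
    using eig(1) by simp
qed

lemma SS4_stable_iff_Hurwitz:
  fixes u :: real
  defines "q \<equiv> 1 + d4 * u" and "b \<equiv> 1 - (a1 + d1) * u" and "A \<equiv> 1 - a2 * (a1 + d1)"
  defines "c3 \<equiv> b + b3 + b2 * u + b4 * q"
    and "c2 \<equiv> b3 * (b2 * u + b4 * q) + b * (b3 + b4 * q + b2 * u * (1 - a2 * a1))
                + b2 * b4 * u / q * (q^2 - d2 * d4)"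
    and "c1 \<equiv> b * (b2 * b4 * u / q * (q^2 * (1 - a2 * a1) - d2 * d4) + b3 * b4 * q)
                + b2 * b3 * u * b * A + b2 * b3 * b4 * u / q * (q^2 - d2 * d4)"
    and "c0 \<equiv> b2 * b3 * b4 * u / q * b * (q^2 * A - d2 * d4)"
  assumes st: "(1 - u - a2 * b) * q = d2" and "d2 \<noteq> 0"
  shows "F (vec4 b u u (1 / q)) = 0"
    and "lin_stable F (vec4 b u u (1 / q)) \<longleftrightarrow>
      c3 > 0 \<and> c1 > 0 \<and> c0 > 0 \<and> c1 * c2 * c3 > c1^2 + c3^2 * c0"
proof -
  have "b * (1 - b - (a1 + d1) * u) = 0"
    by (simp add: b_def)
  then show "F (vec4 b u u (1 / q)) = 0"
    unfolding q_def using st \<open>d2 \<noteq> 0\<close> by (intro branch_steady_state) (simp_all add: q_def)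
  have "complex_of_real q \<noteq> 0"
    using st \<open>d2 \<noteq> 0\<close> by auto
  then have "is_eigenvalue (jacobian F (vec4 b u u (1 / q))) lam \<longleftrightarrow>
      lam^4 + c3 * lam^3 + c2 * lam^2 + c1 * lam + c0 = 0" for lam :: complex
    unfolding branch_eigenvalue_iff[OF st[unfolded q_def] \<open>d2 \<noteq> 0\<close>, folded q_def]
    by (intro arg_cong[where f="\<lambda>z. z = (0::complex)"])
      (simp add: c3_def c2_def c1_def c0_def A_def b_def field_simps power2_eq_square
        power3_eq_cube power4_eq_xxxx)
  then show "lin_stable F (vec4 b u u (1 / q)) \<longleftrightarrow>
      c3 > 0 \<and> c1 > 0 \<and> c0 > 0 \<and> c1 * c2 * c3 > c1^2 + c3^2 * c0"
    unfolding lin_stable_def by (simp add: quartic_roots_Re_neg_iff)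
qed

lemma SS4_minus_not_stable:
  fixes a A u :: real and P :: "real^4"
  defines "a \<equiv> a1 + d1" and "A \<equiv> 1 - a2 * a"
  defines "u \<equiv> (- A - d4 * (a2 - 1) - sqrt ((A - d4 * (a2 - 1))^2 - 4 * d2 * d4 * A)) / (2 * d4 * A)"
  defines "P \<equiv> vec4 (1 - a * u) u u (1 / (1 + d4 * u))"
  assumes "b2 > 0" "b3 > 0" "b4 > 0" "d2 > 0" "d4 > 0" and "A \<noteq> 0"
    and D: "(A - d4 * (a2 - 1))^2 - 4 * d2 * d4 * A \<ge> 0"
  shows "F P = 0 \<and> ((\<forall>i. P $ i > 0) \<longrightarrow> \<not> lin_stable F P)"
proof -
  define S where "S = sqrt ((A - d4 * (a2 - 1))^2 - 4 * d2 * d4 * A)"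
  define q where "q = 1 + d4 * u"
  define b where "b = 1 - a * u"
  have S2: "S^2 = (A - d4 * (a2 - 1))^2 - 4 * d2 * d4 * A" and "S \<ge> 0"
    using D by (simp_all add: S_def)
  have "2 * d4 * A * u = - A - d4 * (a2 - 1) + (-1) * S"
    using \<open>d4 > 0\<close> \<open>A \<noteq> 0\<close> by (simp add: u_def S_def field_simps)
  note roots = SS4_root_identities[OF \<open>d4 > 0\<close> \<open>A \<noteq> 0\<close> A_def[THEN meta_eq_to_obj_eq] S2 _ this,
      folded b_def q_def, simplified]
  have "d2 \<noteq> 0"
    using \<open>d2 > 0\<close> by simp
  have P: "P = vec4 b u u (1 / q)"
    by (simp add: P_def b_def q_def)
  note H = SS4_stable_iff_Hurwitz[of u, folded a_def, folded A_def, folded b_def q_def,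
      unfolded P[symmetric], OF roots(1) \<open>d2 \<noteq> 0\<close>]
  have "q \<noteq> 0"
    using roots(1) \<open>d2 \<noteq> 0\<close> by auto
  have "b2 * b3 * b4 * u / q * b * (q^2 * A - d2 * d4) \<le> 0" if "u > 0" "b > 0"
  proof -
    have "q^2 * A - d2 * d4 = - (q * S)"
      using roots(2) by (simp add: algebra_simps)
    then have "b2 * b3 * b4 * u / q * b * (q^2 * A - d2 * d4) = - (b2 * b3 * b4 * u * b * S)"
      using \<open>q \<noteq> 0\<close> by simp
    also have "\<dots> \<le> 0"
      using that \<open>b2 > 0\<close> \<open>b3 > 0\<close> \<open>b4 > 0\<close> \<open>S \<ge> 0\<close> by simp
    finally show ?thesis .
  qed
  moreover have "P $ 1 = b" "P $ 2 = u"
    by (simp_all add: P)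
  ultimately show ?thesis
    using H by (metis not_le)
qed

lemma SS4_Hurwitz_c3_c1_pos:
  fixes u :: real
  defines "q \<equiv> 1 + d4 * u" and "b \<equiv> 1 - (a1 + d1) * u" and "A \<equiv> 1 - a2 * (a1 + d1)"
  assumes "a1 > 0" "a2 > 0" "b2 > 0" "b3 > 0" "b4 > 0" "d1 > 0" "d4 > 0"
    and "u > 0" "b > 0" "A > 0" and qA: "q^2 * A - d2 * d4 > 0"
  shows "b + b3 + b2 * u + b4 * q > 0"
    and "b * (b2 * b4 * u / q * (q^2 * (1 - a2 * a1) - d2 * d4) + b3 * b4 * q)
      + b2 * b3 * u * b * A + b2 * b3 * b4 * u / q * (q^2 - d2 * d4) > 0"
proof -
  have "q > 0"
    using \<open>u > 0\<close> \<open>d4 > 0\<close> by (simp add: q_def add_pos_pos)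
  have "a2 * a1 > 0" "a2 * d1 > 0"
    using \<open>a1 > 0\<close> \<open>a2 > 0\<close> \<open>d1 > 0\<close> by simp_all
  then have "A \<le> 1 - a2 * a1" "A < 1"
    by (simp_all add: A_def algebra_simps)
  then have "q^2 * A \<le> q^2 * (1 - a2 * a1)" "q^2 * A < q^2"
    using \<open>q > 0\<close> by (simp_all add: mult_left_mono)
  then have "q^2 * (1 - a2 * a1) - d2 * d4 > 0" "q^2 - d2 * d4 > 0"
    using qA by linarith+
  then show "b + b3 + b2 * u + b4 * q > 0"
    and "b * (b2 * b4 * u / q * (q^2 * (1 - a2 * a1) - d2 * d4) + b3 * b4 * q)
      + b2 * b3 * u * b * A + b2 * b3 * b4 * u / q * (q^2 - d2 * d4) > 0"
    using assms(4-) \<open>q > 0\<close> by (simp_all add: add_pos_pos)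
qed

lemma SS4_plus_stable_iff:
  fixes a A u q b c3 c2 c1 c0 :: real and P :: "real^4"
  defines "a \<equiv> a1 + d1" and "A \<equiv> 1 - a2 * a"
  defines "u \<equiv> (- A - d4 * (a2 - 1) + sqrt ((A - d4 * (a2 - 1))^2 - 4 * d2 * d4 * A)) / (2 * d4 * A)"
  defines "P \<equiv> vec4 (1 - a * u) u u (1 / (1 + d4 * u))" and "q \<equiv> 1 + d4 * u" and "b \<equiv> 1 - a * u"
  defines "c3 \<equiv> b + b3 + b2 * u + b4 * q"
    and "c2 \<equiv> b3 * (b2 * u + b4 * q) + b * (b3 + b4 * q + b2 * u * (1 - a2 * a1))
                + b2 * b4 * u / q * (q^2 - d2 * d4)"
    and "c1 \<equiv> b * (b2 * b4 * u / q * (q^2 * (1 - a2 * a1) - d2 * d4) + b3 * b4 * q)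
                + b2 * b3 * u * b * A + b2 * b3 * b4 * u / q * (q^2 - d2 * d4)"
    and "c0 \<equiv> b2 * b3 * b4 * u / q * b * (q^2 * A - d2 * d4)"
  assumes "a1 > 0" "a2 > 0" "b2 > 0" "b3 > 0" "b4 > 0" "d1 > 0" "d2 > 0" "d4 > 0" and "A \<noteq> 0"
    and D: "(A - d4 * (a2 - 1))^2 - 4 * d2 * d4 * A \<ge> 0"
  shows "F P = 0 \<and>
    (lin_stable F P \<longleftrightarrow>
      0 < a * u \<and> a * u < 1 \<and> 0 < d2 \<and> d2 < (A - d4 * (a2 - 1))^2 / (4 * d4 * A) \<and>
      c1 * c2 * c3 > c3^2 * c0 + c1^2)"
proof -
  define S where "S = sqrt ((A - d4 * (a2 - 1))^2 - 4 * d2 * d4 * A)"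
  have S2: "S^2 = (A - d4 * (a2 - 1))^2 - 4 * d2 * d4 * A" and "S \<ge> 0"
    using D by (simp_all add: S_def)
  have "2 * d4 * A * u = - A - d4 * (a2 - 1) + 1 * S"
    using \<open>d4 > 0\<close> \<open>A \<noteq> 0\<close> by (simp add: u_def S_def field_simps)
  note roots = SS4_root_identities[OF \<open>d4 > 0\<close> \<open>A \<noteq> 0\<close> A_def[THEN meta_eq_to_obj_eq] S2 _ this]
  have "d2 \<noteq> 0" and "a > 0"
    using \<open>d2 > 0\<close> \<open>a1 > 0\<close> \<open>d1 > 0\<close> by (simp_all add: a_def)
  have P: "P = vec4 b u u (1 / q)"
    by (simp add: P_def b_def q_def)
  note H = SS4_stable_iff_Hurwitz[of u, folded a_def, folded A_def, folded b_def q_def,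
      folded c3_def c2_def c1_def c0_def, unfolded P[symmetric], OF roots(1)[folded b_def q_def]
      \<open>d2 \<noteq> 0\<close>]
  have qS: "(1 + d4 * u)^2 * A - d2 * d4 = (1 + d4 * u) * S"
    using roots(2) by simp
  have "q \<noteq> 0"
    using roots(1) \<open>d2 \<noteq> 0\<close> by (auto simp: q_def)
  then have "c0 = b2 * b3 * b4 * (u * (1 - a * u) * S)"
    using qS by (simp add: c0_def q_def b_def)
  moreover have "b2 * b3 * b4 > 0"
    using \<open>b2 > 0\<close> \<open>b3 > 0\<close> \<open>b4 > 0\<close> by simp
  ultimately have c0: "c0 > 0 \<longleftrightarrow> u * (1 - a * u) * S > 0"
    by (metis mult_pos_pos zero_less_mult_pos)
  have "c3 > 0 \<and> c1 > 0" if "c0 > 0"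
  proof -
    note pos = SS4_plus_positivity[OF \<open>a > 0\<close> \<open>d2 > 0\<close> \<open>d4 > 0\<close> \<open>S \<ge> 0\<close> qS that[unfolded c0]]
    then have "q^2 * A - d2 * d4 > 0"
      by (simp add: q_def)
    with pos show ?thesis
      unfolding c3_def c1_def q_def b_def A_def a_def
      using SS4_Hurwitz_c3_c1_pos[of u] \<open>a1 > 0\<close> \<open>a2 > 0\<close> \<open>b2 > 0\<close> \<open>b3 > 0\<close> \<open>b4 > 0\<close>
        \<open>d1 > 0\<close> \<open>d4 > 0\<close>
      by (simp add: q_def a_def A_def)
  qed
  with H c0 SS4_plus_sign_iff[OF \<open>a > 0\<close> \<open>d2 > 0\<close> \<open>d4 > 0\<close> \<open>S \<ge> 0\<close> S2 qS] \<open>d2 > 0\<close>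
  show ?thesis
    by (auto simp: add.commute)
qed

end

theorem lemmaC1:
  fixes alpha1 alpha2 beta2 beta3 beta4 delta1 delta2 delta4 :: real
  assumes pos: "alpha1 > 0" "alpha2 > 0" "beta2 > 0" "beta3 > 0" "beta4 > 0"
               "delta1 > 0" "delta2 > 0" "delta4 > 0"
  defines "F \<equiv> lv_rhs alpha1 alpha2 beta2 beta3 beta4 delta1 delta2 delta4"
  shows "(F (vec4 0 0 0 1) = 0 \<and> lin_unstable F (vec4 0 0 0 1)) \<and>
    (F (vec4 1 0 0 1) = 0 \<and> (lin_stable F (vec4 1 0 0 1) \<longleftrightarrow> alpha2 + delta2 > 1)) \<and>
    ((1 + delta4)^2 - 4 * delta2 * delta4 > 0 \<longrightarrow>
      (let u = (delta4 - 1 - sqrt ((1 + delta4)^2 - 4 * delta2 * delta4)) / (2 * delta4);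
           P = vec4 0 u u (1 / (1 + delta4 * u))
       in F P = 0 \<and> lin_unstable F P)) \<and>
    ((1 + delta4)^2 - 4 * delta2 * delta4 \<ge> 0 \<longrightarrow>
      (let u = (delta4 - 1 + sqrt ((1 + delta4)^2 - 4 * delta2 * delta4)) / (2 * delta4);
           P = vec4 0 u u (1 / (1 + delta4 * u));
           a = alpha1 + delta1;
           K = (a + delta4) * (a - 1) / a^2
       in F P = 0 \<and>
          (lin_stable F P \<longleftrightarrow>
             (delta2 < K \<or>
              (K \<le> delta2 \<and> delta2 < (1 + delta4)^2 / (4 * delta4) \<and> 1 / delta4 < (a - 2) / a))))) \<and>
    (1 - alpha2 * (alpha1 + delta1) \<noteq> 0 \<longrightarrow>
      (1 - alpha2 * (alpha1 + delta1) - delta4 * (alpha2 - 1))^2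
        - 4 * delta2 * delta4 * (1 - alpha2 * (alpha1 + delta1)) \<ge> 0 \<longrightarrow>
      (let a = alpha1 + delta1;
           A = 1 - alpha2 * a;
           u = (- A - delta4 * (alpha2 - 1) - sqrt ((A - delta4 * (alpha2 - 1))^2 - 4 * delta2 * delta4 * A))
               / (2 * delta4 * A);
           P = vec4 (1 - a * u) u u (1 / (1 + delta4 * u))
       in F P = 0 \<and> ((\<forall>i. P $ i > 0) \<longrightarrow> \<not> lin_stable F P))) \<and>
    (1 - alpha2 * (alpha1 + delta1) \<noteq> 0 \<longrightarrow>
      (1 - alpha2 * (alpha1 + delta1) - delta4 * (alpha2 - 1))^2
        - 4 * delta2 * delta4 * (1 - alpha2 * (alpha1 + delta1)) \<ge> 0 \<longrightarrow>
      (let a = alpha1 + delta1;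
           A = 1 - alpha2 * a;
           u = (- A - delta4 * (alpha2 - 1) + sqrt ((A - delta4 * (alpha2 - 1))^2 - 4 * delta2 * delta4 * A))
               / (2 * delta4 * A);
           P = vec4 (1 - a * u) u u (1 / (1 + delta4 * u));
           q = 1 + delta4 * u;
           b = 1 - a * u;
           c3 = b + beta3 + beta2 * u + beta4 * q;
           c2 = beta3 * (beta2 * u + beta4 * q) + b * (beta3 + beta4 * q + beta2 * u * (1 - alpha2 * alpha1))
                + beta2 * beta4 * u / q * (q^2 - delta2 * delta4);
           c1 = b * (beta2 * beta4 * u / q * (q^2 * (1 - alpha2 * alpha1) - delta2 * delta4) + beta3 * beta4 * q)
                + beta2 * beta3 * u * b * A + beta2 * beta3 * beta4 * u / q * (q^2 - delta2 * delta4);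
           c0 = beta2 * beta3 * beta4 * u / q * b * (q^2 * A - delta2 * delta4)
       in F P = 0 \<and>
          (lin_stable F P \<longleftrightarrow>
             (0 < a * u \<and> a * u < 1 \<and>
              0 < delta2 \<and> delta2 < (A - delta4 * (alpha2 - 1))^2 / (4 * delta4 * A) \<and>
              c1 * c2 * c3 > c3^2 * c0 + c1^2))))"
  unfolding F_def Let_def
  using SS1_unstable SS2_stable_iff[OF pos(3,4,5)]
    SS3_minus_unstable[OF pos(1,6,3,5,7,8)] SS3_plus_stable_iff[OF pos(1,6,3,4,5,7,8)]
    SS4_minus_not_stable[OF pos(3,4,5,7,8)] SS4_plus_stable_iff[OF pos]
  by blast

end
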